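(* Let $f\in H^1(\mathbb S)$ and $\overline\omega\in\widehat L_2(\mathbb S)$. For $(x,y)\in\mathbb R^2\setminus\{(x,f(x)):x\in\mathbb R\}$ let $$V^1(x,y):=-\frac1{4\pi}\int_{-\pi}^{\pi}\overline\omega(s)\frac{\tanh((y-f(s))/2)\,[1+\tan^2((x-s)/2)]}{\tan^2((x-s)/2)+\tanh^2((y-f(s))/2)}\,ds,$$ $$V^2(x,y):=\frac1{4\pi}\int_{-\pi}^{\pi}\overline\omega(s)\frac{\tan((x-s)/2)\,[1-\tanh^2((y-f(s))/2)]}{\tan^2((x-s)/2)+\tanh^2((y-f(s))/2)}\,ds,$$ set $V:=(V^1,V^2)$, $\Omega_\pm:=\{(x,y)\in\mathbb R^2:\pm(f(x)-y)<0\}$ and $V_\pm:=V|_{\Omega_\pm}$. Then there exists a constant $C=C(\|f\|_\infty)>0$ such that $$|V_\pm(x,y)|\le C\|\overline\omega\|_1e^{-|y|/2}$$ for all $(x,y)\in\Omega_\pm$ with $|y|\ge 1+2\|f\|_\infty$.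
   Context: $\mathbb S:=\mathbb R/2\pi\mathbb Z$; functions on $\mathbb S$ are $2\pi$-periodic functions on $\mathbb R$. $H^1(\mathbb S)$ is the periodic Sobolev space, $\widehat L_2(\mathbb S):=\{h\in L_2(\mathbb S):\int_{-\pi}^{\pi}h\,dx=0\}$, and $\|\overline\omega\|_1:=\int_{-\pi}^{\pi}|\overline\omega|\,dx$. *)

theory Defs
  imports "HOL-Analysis.Analysis"
begin

text \<open>Functions on the circle S = R/2piZ are 2pi-periodic functions on R.\<close>
definition periodic2pi :: "(real \<Rightarrow> real) \<Rightarrow> bool" where
  "periodic2pi h \<longleftrightarrow> (\<forall>x. h (x + 2*pi) = h x)"

definition H1_per :: "(real \<Rightarrow> real) \<Rightarrow> bool" where
  "H1_per f \<longleftrightarrow> periodic2pi f \<and>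
     (\<exists>g. periodic2pi g \<and> g \<in> borel_measurable lborel \<and>
          set_integrable lborel {-pi..pi} (\<lambda>s. (g s)\<^sup>2) \<and>
          (\<forall>x. f x = f 0 + (LBINT s=0..x. g s)))"

definition L2hat_per :: "(real \<Rightarrow> real) \<Rightarrow> bool" where
  "L2hat_per w \<longleftrightarrow> periodic2pi w \<and> w \<in> borel_measurable lborel \<and>
     set_integrable lborel {-pi..pi} (\<lambda>s. (w s)\<^sup>2) \<and>
     (LINT s:{-pi..pi}|lborel. w s) = 0"

definition L1norm_per :: "(real \<Rightarrow> real) \<Rightarrow> real" where
  "L1norm_per w = (LINT s:{-pi..pi}|lborel. \<bar>w s\<bar>)"

definition supnorm :: "(real \<Rightarrow> real) \<Rightarrow> real" where
  "supnorm f = (SUP x. \<bar>f x\<bar>)"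

definition V1 :: "(real \<Rightarrow> real) \<Rightarrow> (real \<Rightarrow> real) \<Rightarrow> real \<Rightarrow> real \<Rightarrow> real" where
  "V1 f w x y = - (1 / (4*pi)) * (LINT s:{-pi..pi}|lborel.
      w s * (tanh ((y - f s)/2) * (1 + (tan ((x - s)/2))\<^sup>2)) /
        ((tan ((x - s)/2))\<^sup>2 + (tanh ((y - f s)/2))\<^sup>2))"

definition V2 :: "(real \<Rightarrow> real) \<Rightarrow> (real \<Rightarrow> real) \<Rightarrow> real \<Rightarrow> real \<Rightarrow> real" where
  "V2 f w x y = (1 / (4*pi)) * (LINT s:{-pi..pi}|lborel.
      w s * (tan ((x - s)/2) * (1 - (tanh ((y - f s)/2))\<^sup>2)) /
        ((tan ((x - s)/2))\<^sup>2 + (tanh ((y - f s)/2))\<^sup>2))"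

end

(*
  Write v = y - f s. Since |y| >= 1 + 2 sup|f|, v has the sign of y and |v| >= max 1 (|y|/2),
  so t = tanh (v/2) is exponentially close to sgn y: with E = exp (-|v|) <= 1/2 one has
  |t| = (1 - E)/(1 + E), hence 1 - |t| <= 2E and (1 - t^2)/|t| <= 8E.
  For every a = tan ((x - s)/2), AM-GM bounds the V2 kernel a (1 - t^2)/(a^2 + t^2) by
  (1 - t^2)/(2|t|), and the V1 kernel t (1 + a^2)/(a^2 + t^2) differs from sgn t by at most
  (1 - |t|) + (1 - t^2)/|t|. The V1 kernel itself is not small, but as the vorticity has mean
  zero its constant part sgn y integrates to nothing. Thus |V1| <= 10/(4 pi) ||w||_1 e^(-|y|/2)
  and |V2| <= 4/(4 pi) ||w||_1 e^(-|y|/2), so C = 2 works.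
*)
theory Submission
  imports Defs
begin

lemma periodic2pi_shift_int:
  assumes "periodic2pi f"
  shows "f (x + 2*pi * of_int k) = f x"
proof (induction k rule: int_induct[where k = 0])
  case (step1 i)
  have "f (x + 2*pi * of_int (i + 1)) = f ((x + 2*pi * of_int i) + 2*pi)"
    by (simp add: algebra_simps)
  with step1 assms show ?case
    unfolding periodic2pi_def by simp
next
  case (step2 i)
  have "f (x + 2*pi * of_int i) = f ((x + 2*pi * of_int (i - 1)) + 2*pi)"
    by (simp add: algebra_simps)
  with step2 assms show ?case
    unfolding periodic2pi_def by simp
qed simp

lemma periodic2pi_value_in_period:
  assumes "periodic2pi f"
  obtains x' where "x' \<in> {-pi..pi}" "f x = f x'"
proof
  define k where "k = \<lfloor>(x + pi) / (2*pi)\<rfloor>"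
  have "of_int k \<le> (x + pi) / (2*pi)" "(x + pi) / (2*pi) < of_int k + 1"
    unfolding k_def by linarith+
  then have "2*pi * of_int k \<le> x + pi" "x + pi < 2*pi * (of_int k + 1)"
    by (simp_all add: field_simps)
  then show "x - 2*pi * of_int k \<in> {-pi..pi}"
    by (simp add: algebra_simps)
  show "f x = f (x - 2*pi * of_int k)"
    using periodic2pi_shift_int[OF assms, of "x - 2*pi * of_int k" k] by simp
qed

lemma set_integral_abs_nonneg: "0 \<le> (LINT s:S|M. \<bar>f s\<bar> :: real)"
  unfolding set_lebesgue_integral_def by (rule Bochner_Integration.integral_nonneg) (simp add: indicator_def)

lemma set_integral_abs_mono_set:
  fixes f :: "'a \<Rightarrow> real"
  assumes "set_integrable M B f" "A \<subseteq> B"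
  shows "(LINT s:A|M. \<bar>f s\<bar>) \<le> (LINT s:B|M. \<bar>f s\<bar>)"
  unfolding set_lebesgue_integral_def
  using set_integrable_abs[OF assms(1)] assms(2) unfolding set_integrable_def
  by (intro integral_mono') (auto simp: indicator_def)

lemma abs_interval_integral_le_set_integral_abs:
  fixes g :: "real \<Rightarrow> real"
  assumes g: "set_integrable lborel {a..b} g" and x: "x \<in> {a..b}" and y: "y \<in> {a..b}"
  shows "\<bar>LBINT s=x..y. g s\<bar> \<le> (LINT s:{a..b}|lborel. \<bar>g s\<bar>)"
proof -
  have "\<bar>LBINT s=u..v. g s\<bar> \<le> (LINT s:{a..b}|lborel. \<bar>g s\<bar>)"
    if "u \<le> v" "u \<in> {a..b}" "v \<in> {a..b}" for u v
  proof -
    have "{u..v} \<subseteq> {a..b}" using that by auto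
    then have g_uv: "set_integrable lborel {u..v} g"
      using set_integrable_subset[OF g] by simp
    have "\<bar>LBINT s=u..v. g s\<bar> = \<bar>LINT s:{u..v}|lborel. g s\<bar>"
      using \<open>u \<le> v\<close> by (simp add: interval_integral_Icc)
    also have "\<dots> \<le> (LINT s:{u..v}|lborel. \<bar>g s\<bar>)"
      using set_integral_norm_bound[OF g_uv] by simp
    also have "\<dots> \<le> (LINT s:{a..b}|lborel. \<bar>g s\<bar>)"
      using g \<open>{u..v} \<subseteq> {a..b}\<close> by (rule set_integral_abs_mono_set)
    finally show ?thesis .
  qed
  from this[of x y] this[of y x] x y show ?thesis
    by (cases "x \<le> y") (auto simp: interval_integral_endpoints_reverse[of x y])
qed

lemma set_integrable_Icc_if_square_integrable:
  fixes g :: "real \<Rightarrow> real"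
  assumes g_meas: "g \<in> borel_measurable lborel"
    and g_sq: "set_integrable lborel {a..b} (\<lambda>s. (g s)\<^sup>2)"
  shows "set_integrable lborel {a..b} g"
proof -
  have "set_integrable lborel {a..b} (\<lambda>s. 1 + (g s)\<^sup>2)"
    using borel_integrable_atLeastAtMost'[of a b "\<lambda>_. 1::real"] g_sq
    by (intro set_integral_add) auto
  then show ?thesis
  proof (rule set_integrable_bound)
    show "set_borel_measurable lborel {a..b} g"
      using g_meas unfolding set_borel_measurable_def by measurable
    have "\<bar>r\<bar> \<le> 1 + r\<^sup>2" for r :: real
      using sum_squares_ge_zero[of "\<bar>r\<bar> - 1" 0] by (simp add: power2_eq_square algebra_simps)
    then show "AE s in lborel. s \<in> {a..b} \<longrightarrow> norm (g s) \<le> norm (1 + (g s)\<^sup>2)"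
      by auto
  qed
qed

lemma set_integral_eq_0_if_not_integrable:
  "\<not> set_integrable M S h \<Longrightarrow> (LINT s:S|M. h s) = 0"
  unfolding set_lebesgue_integral_def set_integrable_def by (rule not_integrable_integral_eq)

text \<open>No measurability of \<open>h\<close> is assumed: a non-integrable \<open>h\<close> has integral 0.\<close>
lemma abs_set_integral_le_if_dominated:
  fixes h w :: "'a \<Rightarrow> real"
  assumes w: "set_integrable M S w" and dom: "\<And>s. s \<in> S \<Longrightarrow> \<bar>h s\<bar> \<le> c * \<bar>w s\<bar>" and "0 \<le> c"
  shows "\<bar>LINT s:S|M. h s\<bar> \<le> c * (LINT s:S|M. \<bar>w s\<bar>)"
proof (cases "set_integrable M S h")
  case True
  have "\<bar>LINT s:S|M. h s\<bar> \<le> (LINT s:S|M. \<bar>h s\<bar>)"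
    using set_integral_norm_bound[OF True] by simp
  also have "\<dots> \<le> (LINT s:S|M. c * \<bar>w s\<bar>)"
    using dom by (intro set_integral_mono set_integrable_abs True set_integrable_mult_right w) auto
  finally show ?thesis by simp
next
  case False
  then show ?thesis
    using mult_nonneg_nonneg[OF \<open>0 \<le> c\<close> set_integral_abs_nonneg]
    by (simp add: set_integral_eq_0_if_not_integrable)
qed

lemma abs_set_integral_le_if_dominated_mean_zero:
  fixes h w :: "'a \<Rightarrow> real"
  assumes w: "set_integrable M S w" and w_mean: "(LINT s:S|M. w s) = 0"
    and dom: "\<And>s. s \<in> S \<Longrightarrow> \<bar>h s - \<sigma> * w s\<bar> \<le> c * \<bar>w s\<bar>" and "0 \<le> c"
  shows "\<bar>LINT s:S|M. h s\<bar> \<le> c * (LINT s:S|M. \<bar>w s\<bar>)"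
proof (cases "set_integrable M S h")
  case True
  have "(LINT s:S|M. h s) = (LINT s:S|M. h s - \<sigma> * w s)"
    using True w w_mean by simp
  then show ?thesis
    using abs_set_integral_le_if_dominated[OF w dom \<open>0 \<le> c\<close>] by simp
next
  case False
  then show ?thesis
    using mult_nonneg_nonneg[OF \<open>0 \<le> c\<close> set_integral_abs_nonneg]
    by (simp add: set_integral_eq_0_if_not_integrable)
qed

lemma H1_per_bounded:
  assumes "H1_per f"
  shows "bdd_above (range (\<lambda>x. \<bar>f x\<bar>))"
proof -
  obtain g where per: "periodic2pi f" and g_meas: "g \<in> borel_measurable lborel"
    and g_sq: "set_integrable lborel {-pi..pi} (\<lambda>s. (g s)\<^sup>2)"
    and f_eq: "\<And>x. f x = f 0 + (LBINT s=0..x. g s)"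
    using assms unfolding H1_per_def by blast
  have g: "set_integrable lborel {-pi..pi} g"
    using g_meas g_sq by (rule set_integrable_Icc_if_square_integrable)
  have "\<bar>f x\<bar> \<le> \<bar>f 0\<bar> + (LINT s:{-pi..pi}|lborel. \<bar>g s\<bar>)" for x
  proof -
    obtain x' where x': "x' \<in> {-pi..pi}" "f x = f x'"
      using periodic2pi_value_in_period[OF per] .
    have "\<bar>LBINT s=0..x'. g s\<bar> \<le> (LINT s:{-pi..pi}|lborel. \<bar>g s\<bar>)"
      using abs_interval_integral_le_set_integral_abs[OF g _ x'(1), of 0]
      by (simp add: zero_ereal_def)
    then show ?thesis
      using f_eq[of x'] x'(2) by linarith
  qed
  then show ?thesis by (intro bdd_aboveI2)
qed

lemma abs_le_supnorm:
  assumes "H1_per f"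
  shows "\<bar>f x\<bar> \<le> supnorm f"
  unfolding supnorm_def using H1_per_bounded[OF assms] by (rule cSUP_upper[rotated]) simp

lemma abs_cross_kernel_le:
  fixes a t :: real
  assumes "t \<noteq> 0"
  shows "\<bar>a * (1 - t\<^sup>2) / (a\<^sup>2 + t\<^sup>2)\<bar> \<le> \<bar>1 - t\<^sup>2\<bar> / (2 * \<bar>t\<bar>)"
proof -
  have den: "0 < a\<^sup>2 + t\<^sup>2" using assms by (simp add: add_nonneg_pos)
  have "2 * \<bar>t\<bar> * \<bar>a\<bar> \<le> a\<^sup>2 + t\<^sup>2"
    using sum_squares_ge_zero[of "\<bar>a\<bar> - \<bar>t\<bar>" 0] by (simp add: power2_eq_square algebra_simps)
  then have "\<bar>a\<bar> / (a\<^sup>2 + t\<^sup>2) \<le> 1 / (2 * \<bar>t\<bar>)"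
    using den assms by (simp add: field_simps)
  then have "\<bar>1 - t\<^sup>2\<bar> * (\<bar>a\<bar> / (a\<^sup>2 + t\<^sup>2)) \<le> \<bar>1 - t\<^sup>2\<bar> * (1 / (2 * \<bar>t\<bar>))"
    by (rule mult_left_mono) simp
  then show ?thesis
    using den by (simp add: abs_mult mult.commute)
qed

lemma abs_kernel_minus_sgn_le:
  fixes a t :: real
  assumes "t \<noteq> 0"
  shows "\<bar>t * (1 + a\<^sup>2) / (a\<^sup>2 + t\<^sup>2) - sgn t\<bar> \<le> \<bar>t - sgn t\<bar> + \<bar>1 - t\<^sup>2\<bar> / \<bar>t\<bar>"
proof -
  have den: "0 < a\<^sup>2 + t\<^sup>2" using assms by (simp add: add_nonneg_pos)
  then have "a\<^sup>2 + t\<^sup>2 \<noteq> 0" by linarith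
  then have split: "t * (1 + a\<^sup>2) / (a\<^sup>2 + t\<^sup>2) - sgn t = (t - sgn t) + t * (1 - t\<^sup>2) / (a\<^sup>2 + t\<^sup>2)"
    by (simp add: field_simps)
  have "\<bar>t * (1 - t\<^sup>2) / (a\<^sup>2 + t\<^sup>2)\<bar> \<le> \<bar>1 - t\<^sup>2\<bar> / \<bar>t\<bar>"
  proof -
    have "\<bar>t * (1 - t\<^sup>2) / (a\<^sup>2 + t\<^sup>2)\<bar> = \<bar>t\<bar> * \<bar>1 - t\<^sup>2\<bar> / (a\<^sup>2 + t\<^sup>2)"
      using den by (simp add: abs_mult)
    also have "\<dots> \<le> \<bar>t\<bar> * \<bar>1 - t\<^sup>2\<bar> / \<bar>t\<bar>\<^sup>2"
      using den assms by (intro divide_left_mono mult_pos_pos) auto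
    also have "\<dots> = \<bar>1 - t\<^sup>2\<bar> / \<bar>t\<bar>"
      using assms by (simp add: power2_eq_square divide_simps)
    finally show ?thesis .
  qed
  then show ?thesis
    unfolding split using abs_triangle_ineq[of "t - sgn t" "t * (1 - t\<^sup>2) / (a\<^sup>2 + t\<^sup>2)"] by linarith
qed

lemma tanh_half_tail_bounds:
  fixes v :: real
  assumes "1 \<le> \<bar>v\<bar>"
  shows "1 - \<bar>tanh (v/2)\<bar> \<le> 2 * exp (- \<bar>v\<bar>)"
    and "(1 - (tanh (v/2))\<^sup>2) / \<bar>tanh (v/2)\<bar> \<le> 8 * exp (- \<bar>v\<bar>)"
proof -
  define E where "E = exp (- \<bar>v\<bar>)"
  have E_pos: "0 < E" unfolding E_def by simp
  have "E \<le> exp (-1)" unfolding E_def using assms by simp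
  also have "exp (-1) \<le> (1/2 :: real)"
    using exp_ge_add_one_self[of 1] by (simp add: exp_minus divide_simps)
  finally have E_half: "E \<le> 1/2" .
  have ne: "1 + E \<noteq> 0" "1 - E \<noteq> 0" using E_pos E_half by auto
  have T: "\<bar>tanh (v/2)\<bar> = (1 - E) / (1 + E)"
    using tanh_real_altdef[of "\<bar>v\<bar>/2"] tanh_real_abs[of "v/2"] by (simp add: E_def)
  show "1 - \<bar>tanh (v/2)\<bar> \<le> 2 * exp (- \<bar>v\<bar>)"
    unfolding T E_def[symmetric] using E_pos by (simp add: field_simps)
  have "(tanh (v/2))\<^sup>2 = ((1 - E) / (1 + E))\<^sup>2"
    by (metis T power2_abs)
  moreover have "1 - ((1 - E) / (1 + E))\<^sup>2 = 4 * E / (1 + E)\<^sup>2"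
    using ne by (simp add: divide_simps) (simp add: power2_eq_square algebra_simps)
  ultimately have "(1 - (tanh (v/2))\<^sup>2) / \<bar>tanh (v/2)\<bar> = 4 * E / ((1 + E) * (1 - E))"
    unfolding T using ne by (simp add: divide_simps) (simp add: power2_eq_square algebra_simps)
  also have "\<dots> \<le> 4 * E / (1/2)"
    using E_pos E_half mult_mono[OF E_half E_half]
    by (intro divide_left_mono) (auto simp: algebra_simps)
  finally show "(1 - (tanh (v/2))\<^sup>2) / \<bar>tanh (v/2)\<bar> \<le> 8 * exp (- \<bar>v\<bar>)"
    by (simp add: E_def)
qed

lemma tanh_half_kernel_bounds:
  fixes v a :: real
  assumes "1 \<le> \<bar>v\<bar>"
  defines "t \<equiv> tanh (v/2)"
  shows "\<bar>t * (1 + a\<^sup>2) / (a\<^sup>2 + t\<^sup>2) - sgn v\<bar> \<le> 10 * exp (- \<bar>v\<bar>)"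
    and "\<bar>a * (1 - t\<^sup>2) / (a\<^sup>2 + t\<^sup>2)\<bar> \<le> 4 * exp (- \<bar>v\<bar>)"
proof -
  have t_ne: "t \<noteq> 0" and sgn_t: "sgn t = sgn v"
    using assms by (auto simp: t_def sgn_if)
  have "\<bar>t\<bar> < 1" unfolding t_def using tanh_real_bounds[of "v/2"] by auto
  then have "\<bar>t - sgn t\<bar> = 1 - \<bar>t\<bar>" and "\<bar>1 - t\<^sup>2\<bar> = 1 - t\<^sup>2"
    using t_ne abs_square_less_1[of t] by (auto simp: sgn_if)
  note tail = tanh_half_tail_bounds[OF assms(1), folded t_def]
  have dev: "\<bar>t - sgn t\<bar> \<le> 2 * exp (- \<bar>v\<bar>)" and quot: "\<bar>1 - t\<^sup>2\<bar> / \<bar>t\<bar> \<le> 8 * exp (- \<bar>v\<bar>)"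
    using tail \<open>\<bar>t - sgn t\<bar> = 1 - \<bar>t\<bar>\<close> \<open>\<bar>1 - t\<^sup>2\<bar> = 1 - t\<^sup>2\<close> by simp_all
  show "\<bar>t * (1 + a\<^sup>2) / (a\<^sup>2 + t\<^sup>2) - sgn v\<bar> \<le> 10 * exp (- \<bar>v\<bar>)"
    using abs_kernel_minus_sgn_le[OF t_ne, of a] dev quot unfolding sgn_t by linarith
  show "\<bar>a * (1 - t\<^sup>2) / (a\<^sup>2 + t\<^sup>2)\<bar> \<le> 4 * exp (- \<bar>v\<bar>)"
    using abs_cross_kernel_le[OF t_ne, of a] quot by simp
qed

lemma far_from_graph:
  fixes y z :: real
  assumes "1 + 2 * \<bar>z\<bar> \<le> \<bar>y\<bar>"
  shows "1 \<le> \<bar>y - z\<bar>" and "sgn (y - z) = sgn y" and "exp (- \<bar>y - z\<bar>) \<le> exp (- \<bar>y\<bar> / 2)"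
  using assms abs_triangle_ineq2[of y z] by (auto simp: sgn_if)

text \<open>The kernel bounds hold for every value of \<open>tan ((x - s)/2)\<close>, including the junk
  value \<open>tan (pi/2) = 0\<close>.\<close>
definition V1_kernel :: "(real \<Rightarrow> real) \<Rightarrow> real \<Rightarrow> real \<Rightarrow> real \<Rightarrow> real" where
  "V1_kernel f x y s = tanh ((y - f s)/2) * (1 + (tan ((x - s)/2))\<^sup>2) /
      ((tan ((x - s)/2))\<^sup>2 + (tanh ((y - f s)/2))\<^sup>2)"

definition V2_kernel :: "(real \<Rightarrow> real) \<Rightarrow> real \<Rightarrow> real \<Rightarrow> real \<Rightarrow> real" where
  "V2_kernel f x y s = tan ((x - s)/2) * (1 - (tanh ((y - f s)/2))\<^sup>2) /
      ((tan ((x - s)/2))\<^sup>2 + (tanh ((y - f s)/2))\<^sup>2)"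

lemma V1_eq_kernel_integral: "V1 f w x y = - (1 / (4*pi)) * (LINT s:{-pi..pi}|lborel. w s * V1_kernel f x y s)"
  by (simp add: V1_def V1_kernel_def)

lemma V2_eq_kernel_integral: "V2 f w x y = (1 / (4*pi)) * (LINT s:{-pi..pi}|lborel. w s * V2_kernel f x y s)"
  by (simp add: V2_def V2_kernel_def)

lemma V1_kernel_minus_sgn_le:
  assumes "1 + 2 * \<bar>f s\<bar> \<le> \<bar>y\<bar>"
  shows "\<bar>V1_kernel f x y s - sgn y\<bar> \<le> 10 * exp (- \<bar>y\<bar> / 2)"
  using tanh_half_kernel_bounds(1)[OF far_from_graph(1)[OF assms], of "tan ((x - s)/2)"]
    far_from_graph(2,3)[OF assms]
  unfolding V1_kernel_def by linarith

lemma abs_V2_kernel_le: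
  assumes "1 + 2 * \<bar>f s\<bar> \<le> \<bar>y\<bar>"
  shows "\<bar>V2_kernel f x y s\<bar> \<le> 4 * exp (- \<bar>y\<bar> / 2)"
  using tanh_half_kernel_bounds(2)[OF far_from_graph(1)[OF assms], of "tan ((x - s)/2)"]
    far_from_graph(3)[OF assms]
  unfolding V2_kernel_def by linarith

lemma abs_V1_le:
  assumes w: "set_integrable lborel {-pi..pi} w" and w_mean: "(LINT s:{-pi..pi}|lborel. w s) = 0"
    and far: "\<And>s. 1 + 2 * \<bar>f s\<bar> \<le> \<bar>y\<bar>"
  shows "\<bar>V1 f w x y\<bar> \<le> 10 * L1norm_per w * exp (- \<bar>y\<bar> / 2) / (4 * pi)"
proof -
  have "\<bar>w s * V1_kernel f x y s - sgn y * w s\<bar> \<le> 10 * exp (- \<bar>y\<bar> / 2) * \<bar>w s\<bar>" for s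
    using mult_left_mono[OF V1_kernel_minus_sgn_le[where f = f and s = s and x = x, OF far], of "\<bar>w s\<bar>"]
    by (simp add: abs_mult[symmetric] algebra_simps)
  then have "\<bar>LINT s:{-pi..pi}|lborel. w s * V1_kernel f x y s\<bar> \<le> 10 * exp (- \<bar>y\<bar> / 2) * L1norm_per w"
    unfolding L1norm_per_def by (intro abs_set_integral_le_if_dominated_mean_zero[OF w w_mean]) auto
  then show ?thesis
    unfolding V1_eq_kernel_integral by (simp add: abs_mult divide_simps mult_ac)
qed

lemma abs_V2_le:
  assumes w: "set_integrable lborel {-pi..pi} w" and far: "\<And>s. 1 + 2 * \<bar>f s\<bar> \<le> \<bar>y\<bar>"
  shows "\<bar>V2 f w x y\<bar> \<le> 4 * L1norm_per w * exp (- \<bar>y\<bar> / 2) / (4 * pi)"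
proof -
  have "\<bar>w s * V2_kernel f x y s\<bar> \<le> 4 * exp (- \<bar>y\<bar> / 2) * \<bar>w s\<bar>" for s
    using mult_left_mono[OF abs_V2_kernel_le[where f = f and s = s and x = x, OF far], of "\<bar>w s\<bar>"]
    by (simp add: abs_mult mult.commute)
  then have "\<bar>LINT s:{-pi..pi}|lborel. w s * V2_kernel f x y s\<bar> \<le> 4 * exp (- \<bar>y\<bar> / 2) * L1norm_per w"
    unfolding L1norm_per_def by (intro abs_set_integral_le_if_dominated[OF w]) auto
  then show ?thesis
    unfolding V2_eq_kernel_integral by (simp add: abs_mult divide_simps mult_ac)
qed

theorem lemma2p1:
  shows "\<forall>M. \<exists>C>0. \<forall>f w. H1_per f \<longrightarrow> L2hat_per w \<longrightarrow> supnorm f = M \<longrightarrow>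
     (\<forall>\<sigma>\<in>{-1, 1::real}. \<forall>x y. \<sigma> * (f x - y) < 0 \<longrightarrow> \<bar>y\<bar> \<ge> 1 + 2 * supnorm f \<longrightarrow>
        sqrt ((V1 f w x y)\<^sup>2 + (V2 f w x y)\<^sup>2) \<le> C * L1norm_per w * exp (- \<bar>y\<bar> / 2))"
proof (intro allI exI[of _ "2::real"] conjI impI ballI)
  fix M f w x y and \<sigma> :: real
  assume f: "H1_per f" and w: "L2hat_per w" and y: "\<bar>y\<bar> \<ge> 1 + 2 * supnorm f"
  have far: "1 + 2 * \<bar>f s\<bar> \<le> \<bar>y\<bar>" for s
    using abs_le_supnorm[OF f, of s] y by linarith
  have w_int: "set_integrable lborel {-pi..pi} w" and w_mean: "(LINT s:{-pi..pi}|lborel. w s) = 0"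
    using w set_integrable_Icc_if_square_integrable unfolding L2hat_per_def by auto
  have "0 \<le> L1norm_per w"
    unfolding L1norm_per_def by (rule set_integral_abs_nonneg)
  have "sqrt ((V1 f w x y)\<^sup>2 + (V2 f w x y)\<^sup>2) \<le> \<bar>V1 f w x y\<bar> + \<bar>V2 f w x y\<bar>"
    by (rule sqrt_sum_squares_le_sum_abs)
  also have "\<dots> \<le> 10 * L1norm_per w * exp (- \<bar>y\<bar> / 2) / (4 * pi)
                  + 4 * L1norm_per w * exp (- \<bar>y\<bar> / 2) / (4 * pi)"
    using abs_V1_le[where f = f and x = x, OF w_int w_mean far]
      abs_V2_le[where f = f and x = x, OF w_int far]
    by (rule add_mono)
  also have "\<dots> = 14 / (4 * pi) * (L1norm_per w * exp (- \<bar>y\<bar> / 2))"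
    by (simp add: field_simps)
  also have "\<dots> \<le> 2 * (L1norm_per w * exp (- \<bar>y\<bar> / 2))"
    using \<open>0 \<le> L1norm_per w\<close> pi_gt3 by (intro mult_right_mono) (simp_all add: field_simps)
  finally show "sqrt ((V1 f w x y)\<^sup>2 + (V2 f w x y)\<^sup>2) \<le> 2 * L1norm_per w * exp (- \<bar>y\<bar> / 2)"
    by (simp only: mult.assoc)
qed simp

end
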